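(* Let $d\in\mathbb{N}$, $\kappa\in(0,\infty)$, and let $\mathfrak{l}\colon\mathbb{R}^d\times\mathbb{R}^d\to\mathbb{R}$ satisfy $\mathfrak{l}(\theta,\vartheta)=\frac{\kappa}{2}\|\theta-\vartheta\|^2$ for all $\theta,\vartheta\in\mathbb{R}^d$. Let $\gamma\in(0,2/\kappa)$, let $(\Omega,\mathcal{F},\mathbb{P})$ be a probability space, let $X_{n,m}\colon\Omega\to\mathbb{R}^d$, $n,m\in\mathbb{Z}$, be i.i.d. random variables, let $M,\mathfrak{M}\in\mathbb{N}$, and let $\Theta\colon\mathbb{N}_0\times\Omega\to\mathbb{R}^d$ satisfy for all $n\in\mathbb{N}$ $$\Theta_n=\Theta_{n-1}-\frac{\gamma}{M}\Big[\sum_{m=1}^M(\nabla_\theta\mathfrak{l})(\Theta_{n-1},X_{n,m})\Big].$$ Assume $\sup_{n,m\in\mathbb{Z}}\|X_{n,m}(\omega)\|<\infty$ for every $\omega\in\Omega$, and that $(X_{n,m})_{(n,m)\in\mathbb{Z}^2}$ and $\Theta_0$ are independent. Let $$\chi=\sum_{n=0}^\infty\frac{\kappa\gamma(1-\kappa\gamma)^n}{M}\Big[\sum_{m=1}^M X_{-n,m}\Big]$$ and assume $$\mathbb{P}\Big(\Big\|(1-\kappa\gamma)\chi+\frac{\kappa\gamma}{M}\sum_{m=1}^M X_{1,m}-\frac{1}{\mathfrak{M}}\sum_{m=1}^{\mathfrak{M}}X_{2,m}\Big\|>\Big\|\chi-\frac{1}{\mathfrak{M}}\sum_{m=1}^{\mathfrak{M}}X_{2,m}\Big\|\Big)>0.$$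 Let $N\in\mathbb{N}$. Then $$\mathbb{P}\Big(\bigcup_{n=N}^\infty\Big\{\sum_{m=1}^{\mathfrak{M}}\mathfrak{l}(\Theta_n,X_{n,-m})>\sum_{m=1}^{\mathfrak{M}}\mathfrak{l}(\Theta_{n-1},X_{n,-m})\Big\}\Big)=1.$$
   Context: $\|\cdot\|$ is the Euclidean norm; $\nabla_\theta\mathfrak{l}$ is the gradient in the first argument. *)

theory Defs
  imports "HOL-Probability.Probability"
begin

definition gradient :: "('a::real_inner \<Rightarrow> real) \<Rightarrow> 'a \<Rightarrow> 'a" where
  "gradient f x = (THE g. (f has_derivative (\<lambda>h. g \<bullet> h)) (at x))"

end

(* For the quadratic loss a mini-batch gradient step is the averaging step
   Theta_n = (1 - kappa gamma) Theta_(n-1) + kappa gamma m_n, with m_n the mean of the n-th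
   training batch, so Theta_(n-1) is the exponential moving average of the past batch means
   up to a geometrically vanishing transient. An i.i.d. family that is bounded pointwise is
   almost surely bounded by a constant, so truncating this average to the last K batches
   costs an error that is uniform in omega.
   By hypothesis, one step taken from chi moves away from the mean of a fresh batch with
   positive probability; by continuity the same holds, with a margin delta, when chi is
   replaced by its truncation, and this event depends on finitely many samples. Its copies
   on disjoint blocks of rows are independent and equiprobable, so by the second
   Borel-Cantelli lemma they occur infinitely often almost surely. At each occurrence the
   margin absorbs the transient and the truncation error: Theta_n is farther than
   Theta_(n-1) from the mean of the test samples X_(n,-m), and since the sum of the squared
   distances from theta to points is their number times the squared distance to their
   mean plus a constant, the test loss increases. *)

theory Submission
  imports Defs
begin

section \<open>Quadratic losses and geometric estimates\<close>

lemma gradient_half_power2_dist: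
  fixes x t :: "'a::real_inner"
  shows "gradient (\<lambda>\<theta>. k / 2 * (norm (\<theta> - x))\<^sup>2) t = k *\<^sub>R (t - x)"
proof -
  have "((\<lambda>\<theta>. k / 2 * ((\<theta> - x) \<bullet> (\<theta> - x))) has_derivative
      (\<lambda>h. k / 2 * ((t - x) \<bullet> h + h \<bullet> (t - x)))) (at t)"
    by (auto intro!: derivative_eq_intros)
  then have deriv: "((\<lambda>\<theta>. k / 2 * (norm (\<theta> - x))\<^sup>2) has_derivative (\<lambda>h. (k *\<^sub>R (t - x)) \<bullet> h)) (at t)"
    by (simp add: power2_norm_eq_inner inner_commute algebra_simps)
  show ?thesis unfolding gradient_def
  proof (rule the_equality)
    fix g assume "((\<lambda>\<theta>. k / 2 * (norm (\<theta> - x))\<^sup>2) has_derivative (\<lambda>h. g \<bullet> h)) (at t)"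
    from has_derivative_unique[OF this deriv] have "\<And>h. (g - k *\<^sub>R (t - x)) \<bullet> h = 0"
      by (metis inner_diff_left right_minus_eq)
    then show "g = k *\<^sub>R (t - x)"
      by (metis inner_eq_zero_iff right_minus_eq)
  qed (rule deriv)
qed

lemma sum_power2_norm_diff_eq_mean:
  fixes y :: "'i \<Rightarrow> 'a::real_inner"
  assumes "finite A" "A \<noteq> {}"
  defines "c \<equiv> (1 / real (card A)) *\<^sub>R (\<Sum>i\<in>A. y i)"
  shows "(\<Sum>i\<in>A. (norm (u - y i))\<^sup>2)
    = real (card A) * (norm (u - c))\<^sup>2 + (\<Sum>i\<in>A. (norm (y i))\<^sup>2) - real (card A) * (norm c)\<^sup>2"
proof -
  have n: "real (card A) > 0" using assms by (simp add: card_gt_0_iff)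
  have sum: "(\<Sum>i\<in>A. y i) = real (card A) *\<^sub>R c" using n by (simp add: c_def)
  have "(\<Sum>i\<in>A. (norm (u - y i))\<^sup>2)
      = real (card A) * (u \<bullet> u) - 2 * (u \<bullet> (\<Sum>i\<in>A. y i)) + (\<Sum>i\<in>A. (norm (y i))\<^sup>2)"
    by (simp add: power2_norm_eq_inner inner_diff_left inner_diff_right sum.distrib sum_subtractf
        inner_sum_right inner_commute algebra_simps sum_distrib_left)
  then show ?thesis
    by (simp add: sum power2_norm_eq_inner inner_diff_left inner_diff_right inner_commute algebra_simps)
qed

lemma sum_power2_norm_diff_less_if_closer_to_mean:
  fixes y :: "'i \<Rightarrow> 'a::real_inner"
  assumes "finite A" "A \<noteq> {}"
    and "norm (s - (1 / real (card A)) *\<^sub>R (\<Sum>i\<in>A. y i)) < norm (t - (1 / real (card A)) *\<^sub>R (\<Sum>i\<in>A. y i))"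
  shows "(\<Sum>i\<in>A. (norm (s - y i))\<^sup>2) < (\<Sum>i\<in>A. (norm (t - y i))\<^sup>2)"
proof -
  have "real (card A) > 0" using assms by (simp add: card_gt_0_iff)
  moreover have "(norm (s - (1 / real (card A)) *\<^sub>R (\<Sum>i\<in>A. y i)))\<^sup>2
      < (norm (t - (1 / real (card A)) *\<^sub>R (\<Sum>i\<in>A. y i)))\<^sup>2"
    using assms(3) by (intro power_strict_mono) auto
  ultimately show ?thesis
    unfolding sum_power2_norm_diff_eq_mean[OF assms(1,2)] by simp
qed

lemma norm_suminf_minus_sum_le_geometric:
  fixes v :: "nat \<Rightarrow> 'a::banach"
  assumes v: "\<And>n. norm (v n) \<le> C * r ^ n" and r: "0 \<le> r" "r < 1"
  shows "norm (suminf v - (\<Sum>n<K. v n)) \<le> C * r ^ K / (1 - r)"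
proof -
  have geom: "summable (\<lambda>n. C * r ^ n)" using r by (intro summable_mult summable_geometric) auto
  then have "summable v" by (rule summable_comparison_test[rotated]) (use v in auto)
  have geom_K: "summable (\<lambda>n. C * r ^ (n + K))" using geom by (subst summable_iff_shift)
  then have tail: "summable (\<lambda>n. norm (v (n + K)))"
    by (rule summable_comparison_test[rotated]) (use v in auto)
  have "suminf v - (\<Sum>n<K. v n) = (\<Sum>n. v (n + K))"
    using suminf_minus_initial_segment[OF \<open>summable v\<close>] by simp
  also have "norm \<dots> \<le> (\<Sum>n. norm (v (n + K)))" by (rule summable_norm[OF tail])
  also have "\<dots> \<le> (\<Sum>n. C * r ^ (n + K))" by (rule suminf_le[OF _ tail geom_K]) (use v in auto)
  also have "\<dots> = C * r ^ K * (\<Sum>n. r ^ n)"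
    by (subst suminf_mult[symmetric]) (use r in \<open>auto simp: power_add mult_ac intro: summable_geometric\<close>)
  also have "\<dots> = C * r ^ K / (1 - r)" using r by (simp add: suminf_geometric)
  finally show ?thesis .
qed

lemma norm_le_of_contracting_recurrence:
  fixes D :: "nat \<Rightarrow> 'a::real_normed_vector"
  assumes step: "\<And>n. norm (D (Suc n) - q *\<^sub>R D n) \<le> c" and q: "\<bar>q\<bar> < 1"
  shows "norm (D n) \<le> \<bar>q\<bar> ^ n * norm (D 0) + c / (1 - \<bar>q\<bar>)"
proof (induction n)
  case 0
  have "0 \<le> c" using step[of 0] norm_ge_zero order_trans by blast
  then show ?case using q by simp
next
  case (Suc n)
  have "norm (D (Suc n)) \<le> norm (q *\<^sub>R D n) + c"
    using norm_triangle_ineq[of "D (Suc n) - q *\<^sub>R D n" "q *\<^sub>R D n"] step[of n] by simp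
  also have "\<dots> \<le> \<bar>q\<bar> * (\<bar>q\<bar> ^ n * norm (D 0) + c / (1 - \<bar>q\<bar>)) + c"
    using Suc.IH by (simp add: mult_left_mono)
  also have "\<dots> = \<bar>q\<bar> ^ Suc n * norm (D 0) + c / (1 - \<bar>q\<bar>)"
    using q by (simp add: field_simps)
  finally show ?case .
qed

definition dist_increase :: "real \<Rightarrow> 'a \<Rightarrow> 'a \<Rightarrow> 'a::real_normed_vector \<Rightarrow> real" where
  "dist_increase q c y a = dist (q *\<^sub>R a + c) y - dist a y"

lemma dist_increase_lipschitz:
  assumes "\<bar>q\<bar> \<le> 1"
  shows "\<bar>dist_increase q c y a - dist_increase q c y a'\<bar> \<le> 2 * dist a a'"
proof -
  have "dist (q *\<^sub>R a + c) (q *\<^sub>R a' + c) = \<bar>q\<bar> * dist a a'"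
    by (simp add: dist_norm flip: scaleR_diff_right)
  also have "\<dots> \<le> dist a a'" using assms by (simp add: mult_left_le_one_le)
  finally have "\<bar>dist (q *\<^sub>R a + c) y - dist (q *\<^sub>R a' + c) y\<bar> \<le> dist a a'"
    using abs_dist_diff_le[of "q *\<^sub>R a + c" y "q *\<^sub>R a' + c"] by (simp add: dist_commute)
  moreover have "\<bar>dist a y - dist a' y\<bar> \<le> dist a a'"
    using abs_dist_diff_le[of a y a'] by (simp add: dist_commute)
  ultimately show ?thesis unfolding dist_increase_def by linarith
qed

lemma minibatch_gradient_step_half_power2_dist:
  fixes \<theta> :: "'a::real_inner" and y :: "nat \<Rightarrow> 'a"
  assumes "1 \<le> k"
  shows "\<theta> - (\<gamma> / real k) *\<^sub>R (\<Sum>m = 1..k. gradient (\<lambda>\<eta>. \<kappa> / 2 * (norm (\<eta> - y m))\<^sup>2) \<theta>)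
    = (1 - \<kappa> * \<gamma>) *\<^sub>R \<theta> + (\<kappa> * \<gamma>) *\<^sub>R ((1 / real k) *\<^sub>R (\<Sum>m = 1..k. y m))"
proof -
  have "(\<Sum>m = 1..k. gradient (\<lambda>\<eta>. \<kappa> / 2 * (norm (\<eta> - y m))\<^sup>2) \<theta>)
      = (\<kappa> * real k) *\<^sub>R \<theta> - \<kappa> *\<^sub>R (\<Sum>m = 1..k. y m)" (is "?grad = _")
    unfolding gradient_half_power2_dist by (simp add: scaleR_diff_right sum_subtractf scaleR_sum_right sum_constant_scaleR)
  have "\<theta> - (\<gamma> / real k) *\<^sub>R ((\<kappa> * real k) *\<^sub>R \<theta> - \<kappa> *\<^sub>R (\<Sum>m = 1..k. y m))
      = (1 - \<kappa> * \<gamma>) *\<^sub>R \<theta> + (\<kappa> * \<gamma>) *\<^sub>R ((1 / real k) *\<^sub>R (\<Sum>m = 1..k. y m))"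
    using assms by (simp add: algebra_simps)
  then show ?thesis by (simp only: \<open>?grad = _\<close>)
qed

section \<open>Moving averages of mini-batch means\<close>

definition batch_mean :: "nat \<Rightarrow> (int \<times> int \<Rightarrow> 'a::real_vector) \<Rightarrow> int \<Rightarrow> 'a" where
  "batch_mean k x r = (1 / real k) *\<^sub>R (\<Sum>m = 1..k. x (r, int m))"

(* Unrolling theta_(r) = (1 - a) theta_(r-1) + a batch_mean k x r gives the series
   sum_j a (1 - a)^j batch_mean k x (r - j) plus a transient; ema keeps its first K terms. *)
definition ema :: "real \<Rightarrow> nat \<Rightarrow> nat \<Rightarrow> (int \<times> int \<Rightarrow> 'a::real_vector) \<Rightarrow> int \<Rightarrow> 'a" where
  "ema a k K x r = (\<Sum>j<K. (a * (1 - a) ^ j) *\<^sub>R batch_mean k x (r - int j))"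

definition ema_error :: "real \<Rightarrow> real \<Rightarrow> nat \<Rightarrow> real" where
  "ema_error a b K = a * b * \<bar>1 - a\<bar> ^ K / (1 - \<bar>1 - a\<bar>)"

lemma norm_batch_mean_le:
  assumes "\<And>i. norm (x i) \<le> b"
  shows "norm (batch_mean k x r) \<le> b"
proof -
  have "norm (\<Sum>m = 1..k. x (r, int m)) \<le> real k * b"
    using sum_norm_bound[of "{1..k}" "\<lambda>m. x (r, int m)" b] assms by simp
  moreover have "0 \<le> b" using assms order_trans norm_ge_zero by blast
  ultimately show ?thesis by (cases "k = 0") (auto simp: batch_mean_def field_simps)
qed

lemma ema_recurrence:
  "ema a k K x r = (1 - a) *\<^sub>R ema a k K x (r - 1) + a *\<^sub>R batch_mean k x r
     - (a * (1 - a) ^ K) *\<^sub>R batch_mean k x (r - int K)"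
proof (induction K)
  case (Suc K)
  have "r - 1 - int K = r - int (Suc K)" by simp
  with Suc show ?case by (simp add: ema_def scaleR_add_right algebra_simps)
qed (simp add: ema_def)

lemma ema_error_tendsto_0: "0 < a \<Longrightarrow> a < 2 \<Longrightarrow> ema_error a b \<longlonglongrightarrow> 0"
  unfolding ema_error_def by (auto intro!: tendsto_eq_intros LIMSEQ_power_zero)

lemma norm_series_minus_ema_le:
  fixes x :: "int \<times> int \<Rightarrow> 'a::banach"
  assumes a: "0 < a" "a < 2" and b: "\<And>i. norm (x i) \<le> b"
  shows "norm ((\<Sum>j. (a * (1 - a) ^ j) *\<^sub>R batch_mean k x (- int j)) - ema a k K x 0)
    \<le> ema_error a b K"
proof -
  define v where "v = (\<lambda>j. (a * (1 - a) ^ j) *\<^sub>R batch_mean k x (- int j))"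
  have "norm (v j) \<le> (a * b) * \<bar>1 - a\<bar> ^ j" for j
    using mult_left_mono[OF norm_batch_mean_le[OF b], of "a * \<bar>1 - a\<bar> ^ j"] a
    by (simp add: v_def abs_mult power_abs mult_ac)
  with a have "norm (suminf v - (\<Sum>j<K. v j)) \<le> ema_error a b K"
    unfolding ema_error_def by (intro norm_suminf_minus_sum_le_geometric) (auto simp: abs_less_iff)
  then show ?thesis by (simp add: v_def ema_def)
qed

lemma norm_iterate_minus_ema_le:
  fixes \<theta> :: "nat \<Rightarrow> 'a::real_normed_vector"
  assumes step: "\<And>n. \<theta> (Suc n) = (1 - a) *\<^sub>R \<theta> n + a *\<^sub>R batch_mean k x (int (Suc n))"
    and a: "0 < a" "a < 2" and b: "\<And>i. norm (x i) \<le> b"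
  shows "norm (\<theta> n - ema a k K x (int n))
    \<le> \<bar>1 - a\<bar> ^ n * norm (\<theta> 0 - ema a k K x 0) + ema_error a b K"
proof -
  define D where "D n = \<theta> n - ema a k K x (int n)" for n
  have "D (Suc n) - (1 - a) *\<^sub>R D n = (a * (1 - a) ^ K) *\<^sub>R batch_mean k x (int (Suc n) - int K)" for n
    using ema_recurrence[of a k K x "int (Suc n)"] step[of n] by (simp add: D_def algebra_simps)
  then have "norm (D (Suc n) - (1 - a) *\<^sub>R D n) \<le> a * \<bar>1 - a\<bar> ^ K * b" for n
    using mult_left_mono[OF norm_batch_mean_le[OF b], of "a * \<bar>1 - a\<bar> ^ K"] a
    by (simp add: abs_mult power_abs)
  with a have "norm (D n) \<le> \<bar>1 - a\<bar> ^ n * norm (D 0) + ema_error a b K"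
    unfolding ema_error_def by (intro norm_le_of_contracting_recurrence) (auto simp: abs_less_iff mult_ac)
  then show ?thesis by (simp add: D_def)
qed

(* A sample path x is indexed by (row, column). margin_event reads the training batches in
   rows 1 - K, ..., 1 and a test batch in row 2; place n shifts the training rows so that
   row 1 lands on row n, and sends the test batch to the columns -1, -2, ... of row n, where
   the theorem draws its test samples. *)
definition window :: "nat \<Rightarrow> nat \<Rightarrow> nat \<Rightarrow> (int \<times> int) set" where
  "window k k' K = {1 - int K..1} \<times> {1..int k} \<union> {2} \<times> {1..int k'}"

definition place :: "int \<Rightarrow> int \<times> int \<Rightarrow> int \<times> int" where
  "place n p = (if fst p \<le> 1 then (n - 1 + fst p, snd p) else (n, - snd p))"

definition margin_event ::
    "real \<Rightarrow> nat \<Rightarrow> nat \<Rightarrow> nat \<Rightarrow> real \<Rightarrow> (int \<times> int \<Rightarrow> 'a::real_normed_vector) \<Rightarrow> bool" where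
  "margin_event a k k' K \<delta> x \<longleftrightarrow>
     \<delta> < dist_increase (1 - a) (a *\<^sub>R batch_mean k x 1) (batch_mean k' x 2) (ema a k K x 0)"

lemma window_nonempty: "1 \<le> k \<Longrightarrow> window k k' K \<noteq> {}"
  by (auto simp: window_def)

lemma inj_on_place: "inj_on (place n) (window k k' K)"
  by (auto simp: inj_on_def place_def window_def split: if_splits)

lemma disjoint_family_place:
  "disjoint_family (\<lambda>j. place (int ((j + 1) * (K + 1))) ` window k k' K)"
proof -
  have rows: "n - int K \<le> fst (place n p) \<and> fst (place n p) \<le> n" if "p \<in> window k k' K" for n p
    using that by (auto simp: place_def window_def)
  have apart: "int ((j + 1) * (K + 1)) < int ((j' + 1) * (K + 1)) - int K" if "j < j'" for j j'
  proof -
    have "(j + 2) * (K + 1) \<le> (j' + 1) * (K + 1)" using that by (intro mult_right_mono) auto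
    then have "(j + 1) * (K + 1) + K < (j' + 1) * (K + 1)" by (simp add: algebra_simps)
    then show ?thesis by linarith
  qed
  show ?thesis unfolding disjoint_family_on_def
  proof (intro ballI impI equals0I)
    fix j j' x assume "j \<noteq> j'"
      and "x \<in> place (int ((j + 1) * (K + 1))) ` window k k' K \<inter> place (int ((j' + 1) * (K + 1))) ` window k k' K"
    then obtain p p' where p: "p \<in> window k k' K" and p': "p' \<in> window k k' K"
      and x: "x = place (int ((j + 1) * (K + 1))) p" and x': "x = place (int ((j' + 1) * (K + 1))) p'"
      by blast
    have "int ((j + 1) * (K + 1)) - int K \<le> fst x \<and> fst x \<le> int ((j + 1) * (K + 1))"
      unfolding x by (rule rows[OF p])
    moreover have "int ((j' + 1) * (K + 1)) - int K \<le> fst x \<and> fst x \<le> int ((j' + 1) * (K + 1))"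
      unfolding x' by (rule rows[OF p'])
    ultimately show False using apart[of j j'] apart[of j' j] \<open>j \<noteq> j'\<close> by (cases "j < j'") auto
  qed
qed

lemma margin_event_cong:
  assumes "\<And>i. i \<in> window k k' K \<Longrightarrow> x i = y i"
  shows "margin_event a k k' K \<delta> x = margin_event a k k' K \<delta> y"
proof -
  have "batch_mean k x r = batch_mean k y r" if "1 - int K \<le> r" "r \<le> 1" for r
    unfolding batch_mean_def using that by (intro arg_cong[where f = "scaleR _"] sum.cong) (auto intro!: assms simp: window_def)
  then have "ema a k K x 0 = ema a k K y 0" "batch_mean k x 1 = batch_mean k y 1"
    unfolding ema_def by (auto intro!: sum.cong)
  moreover have "batch_mean k' x 2 = batch_mean k' y 2"
    unfolding batch_mean_def by (intro arg_cong[where f = "scaleR _"] sum.cong) (auto intro!: assms simp: window_def)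
  ultimately show ?thesis
    unfolding margin_event_def by simp
qed

lemma margin_event_restrict:
  "margin_event a k k' K \<delta> (restrict x (window k k' K)) \<longleftrightarrow> margin_event a k k' K \<delta> x"
  by (rule margin_event_cong) simp

lemma margin_event_measurable:
  "{x \<in> space (PiM (window k k' K) (\<lambda>_. borel)). margin_event a k k' K \<delta> x}
     \<in> sets (PiM (window k k' K) (\<lambda>_. borel :: 'a::{real_normed_vector, second_countable_topology} measure))"
proof -
  let ?P = "PiM (window k k' K) (\<lambda>_. borel :: 'a measure)"
  have mean: "(\<lambda>y. batch_mean k'' y r) \<in> borel_measurable ?P"
    if "\<And>m. m \<in> {1..k''} \<Longrightarrow> (r, int m) \<in> window k k' K" for k'' r
    unfolding batch_mean_def using that
    by (intro borel_measurable_scaleR borel_measurable_const borel_measurable_sum measurable_component_singleton) auto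
  have [measurable]: "(\<lambda>y. batch_mean k y 1) \<in> borel_measurable ?P" "(\<lambda>y. batch_mean k' y 2) \<in> borel_measurable ?P"
    by (intro mean; auto simp: window_def)+
  have [measurable]: "(\<lambda>y. ema a k K y 0) \<in> borel_measurable ?P"
    unfolding ema_def by (intro borel_measurable_sum borel_measurable_scaleR borel_measurable_const mean) (auto simp: window_def)
  show ?thesis unfolding margin_event_def dist_increase_def by measurable
qed

lemma margin_event_place:
  "margin_event a k k' K \<delta> (x \<circ> place n) \<longleftrightarrow>
     \<delta> < dist_increase (1 - a) (a *\<^sub>R batch_mean k x n) (batch_mean k' (x \<circ> apsnd uminus) n) (ema a k K x (n - 1))"
proof -
  have "batch_mean k (x \<circ> place n) r = batch_mean k x (n - 1 + r)" if "r \<le> 1" for r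
    using that by (simp add: batch_mean_def place_def)
  moreover have "batch_mean k' (x \<circ> place n) 2 = batch_mean k' (x \<circ> apsnd uminus) n"
    by (simp add: batch_mean_def place_def)
  ultimately show ?thesis
    unfolding margin_event_def ema_def by (simp add: algebra_simps)
qed

lemma moves_away_infinitely_often:
  fixes \<theta> :: "nat \<Rightarrow> 'a::real_normed_vector"
  assumes step: "\<And>n. \<theta> (Suc n) = (1 - a) *\<^sub>R \<theta> n + a *\<^sub>R batch_mean k x (int (Suc n))"
    and a: "0 < a" "a < 2" and b: "\<And>i. norm (x i) \<le> b"
    and \<delta>: "0 < \<delta>" "4 * ema_error a b K \<le> \<delta>"
    and often: "\<forall>N. \<exists>n\<ge>N. margin_event a k k' K \<delta> (x \<circ> place (int (Suc n)))"
  shows "\<forall>N. \<exists>n\<ge>N. dist (\<theta> n) (batch_mean k' (x \<circ> apsnd uminus) (int (Suc n)))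
                    < dist (\<theta> (Suc n)) (batch_mean k' (x \<circ> apsnd uminus) (int (Suc n)))"
proof
  fix N
  have "(\<lambda>n. \<bar>1 - a\<bar> ^ n * norm (\<theta> 0 - ema a k K x 0)) \<longlonglongrightarrow> 0"
    using a by (auto intro!: tendsto_mult_left_zero LIMSEQ_power_zero)
  from order_tendstoD(2)[OF this, of "\<delta> / 4"] \<delta>(1)
  obtain N0 where N0: "\<And>n. n \<ge> N0 \<Longrightarrow> \<bar>1 - a\<bar> ^ n * norm (\<theta> 0 - ema a k K x 0) < \<delta> / 4"
    by (auto simp: eventually_sequentially)
  obtain n where n: "n \<ge> max N N0" and event: "margin_event a k k' K \<delta> (x \<circ> place (int (Suc n)))"
    using often by blast
  define y where "y = batch_mean k' (x \<circ> apsnd uminus) (int (Suc n))"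
  \<comment> \<open>the margin absorbs the transient and the truncation error, \<open>\<delta>/4\<close> each\<close>
  have "dist (\<theta> n) (ema a k K x (int n)) \<le> \<delta> / 2"
    using norm_iterate_minus_ema_le[OF step a b, of n K] N0[of n] n \<delta>(2) by (simp add: dist_norm)
  moreover have "\<delta> < dist_increase (1 - a) (a *\<^sub>R batch_mean k x (int (Suc n))) y (ema a k K x (int n))"
    using event by (simp add: margin_event_place y_def)
  moreover have "\<bar>1 - a\<bar> \<le> 1" using a by simp
  ultimately have "0 < dist_increase (1 - a) (a *\<^sub>R batch_mean k x (int (Suc n))) y (\<theta> n)"
    using dist_increase_lipschitz[of "1 - a" "a *\<^sub>R batch_mean k x (int (Suc n))" y "\<theta> n" "ema a k K x (int n)"]
    by linarith
  then show "\<exists>n\<ge>N. dist (\<theta> n) (batch_mean k' (x \<circ> apsnd uminus) (int (Suc n)))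
                    < dist (\<theta> (Suc n)) (batch_mean k' (x \<circ> apsnd uminus) (int (Suc n)))"
    using n by (intro exI[of _ n]) (simp add: dist_increase_def step y_def)
qed

lemma margin_event_of_series_margin:
  fixes x :: "int \<times> int \<Rightarrow> 'a::banach"
  assumes a: "0 < a" "a < 2" and b: "\<And>i. norm (x i) \<le> b"
    and margin: "0 < dist_increase (1 - a) (a *\<^sub>R batch_mean k x 1) (batch_mean k' x 2)
                      (\<Sum>j. (a * (1 - a) ^ j) *\<^sub>R batch_mean k x (- int j))"
  shows "\<exists>j K. 4 * ema_error a b K \<le> 1 / Suc j \<and> margin_event a k k' K (1 / Suc j) x"
proof -
  let ?d = "dist_increase (1 - a) (a *\<^sub>R batch_mean k x 1) (batch_mean k' x 2)"
  let ?\<chi> = "\<Sum>j. (a * (1 - a) ^ j) *\<^sub>R batch_mean k x (- int j)"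
  obtain j where j: "1 / Suc j < ?d ?\<chi> / 2"
    using margin by (metis half_gt_zero inverse_eq_divide reals_Archimedean)
  define \<delta> where "\<delta> = 1 / real (Suc j)"
  from order_tendstoD(2)[OF ema_error_tendsto_0[OF a], of "\<delta> / 4"]
  obtain K where K: "ema_error a b K < \<delta> / 4"
    by (auto simp: eventually_sequentially \<delta>_def)
  have "\<bar>?d ?\<chi> - ?d (ema a k K x 0)\<bar> \<le> 2 * dist ?\<chi> (ema a k K x 0)"
    using a by (intro dist_increase_lipschitz) auto
  moreover have "dist ?\<chi> (ema a k K x 0) \<le> ema_error a b K"
    using norm_series_minus_ema_le[OF a b] by (simp add: dist_norm)
  ultimately have "margin_event a k k' K \<delta> x"
    using j K unfolding margin_event_def \<delta>_def[symmetric] by linarith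
  moreover have "4 * ema_error a b K \<le> \<delta>" using K by simp
  ultimately show ?thesis unfolding \<delta>_def by blast
qed

section \<open>Patterns in independent identically distributed families\<close>

context prob_space
begin

lemma AE_infinitely_often_of_indep_equiprobable:
  fixes Z :: "nat \<Rightarrow> 'a \<Rightarrow> bool"
  assumes indep: "indep_vars (\<lambda>_. count_space UNIV) Z UNIV"
    and prob_Z: "\<And>j. prob {\<omega> \<in> space M. Z j \<omega>} = p" and p: "0 < p"
  shows "AE \<omega> in M. \<forall>n. \<exists>j\<ge>n. Z j \<omega>"
proof -
  have Z_measurable[measurable]: "Z j \<in> measurable M (count_space UNIV)" for j
    using indep by (simp add: indep_vars_def)
  have prob_not_Z: "prob (Z j -` {False} \<inter> space M) = 1 - p" for j
  proof -
    have "Z j -` {False} \<inter> space M = space M - {\<omega> \<in> space M. Z j \<omega>}" by auto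
    also have "prob \<dots> = 1 - p"
      using prob_compl[of "{\<omega> \<in> space M. Z j \<omega>}"] prob_Z[of j] by (simp add: pred_def)
    finally show ?thesis .
  qed
  have C: "{\<omega> \<in> space M. \<forall>j\<ge>n. \<not> Z j \<omega>} \<in> events" for n
    by measurable
  have "AE \<omega> in M. \<exists>j\<ge>n. Z j \<omega>" for n
  proof -
    let ?C = "{\<omega> \<in> space M. \<forall>j\<ge>n. \<not> Z j \<omega>}"
    have "prob ?C \<le> (1 - p) ^ Suc k" for k
    proof -
      have "?C \<subseteq> (\<Inter>j\<in>{n..n + k}. Z j -` {False} \<inter> space M)" by force
      moreover have "(\<Inter>j\<in>{n..n + k}. Z j -` {False} \<inter> space M) \<in> events"
        by (intro sets.finite_INT measurable_sets[OF Z_measurable]) auto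
      ultimately have "prob ?C \<le> prob (\<Inter>j\<in>{n..n + k}. Z j -` {False} \<inter> space M)"
        by (rule finite_measure_mono)
      also have "\<dots> = (\<Prod>j\<in>{n..n + k}. prob (Z j -` {False} \<inter> space M))"
        by (rule indep_varsD[OF indep]) auto
      also have "\<dots> = (1 - p) ^ Suc k" by (simp add: prob_not_Z)
      finally show ?thesis .
    qed
    moreover have "p \<le> 1" using prob_Z[of 0] by (metis prob_le_1)
    then have "(\<lambda>k. (1 - p) ^ Suc k) \<longlonglongrightarrow> 0"
      using p by (intro LIMSEQ_Suc LIMSEQ_power_zero) auto
    ultimately have "prob ?C \<le> 0" by (intro LIMSEQ_le_const) auto
    then have "prob ?C = 0" by (simp add: antisym measure_nonneg)
    then have "AE \<omega> in M. \<omega> \<notin> ?C" using prob_eq_0[OF C[of n]] by simp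
    then show ?thesis by (rule AE_mp) (auto intro!: AE_I2)
  qed
  then show ?thesis by (simp add: AE_all_countable)
qed

lemma prob_reindexed_restrict_iid:
  fixes Xs :: "'i \<Rightarrow> 'a \<Rightarrow> 'b::topological_space"
  assumes indep: "indep_vars (\<lambda>_. borel) Xs UNIV" and ident: "\<And>i. distr M borel (Xs i) = D"
    and J: "J \<noteq> {}" and \<sigma>: "inj_on \<sigma> J" and S: "S \<in> sets (PiM J (\<lambda>_. borel))"
  shows "prob ((\<lambda>\<omega>. \<lambda>j\<in>J. Xs (\<sigma> j) \<omega>) -` S \<inter> space M) = measure (PiM J (\<lambda>_. D)) S"
proof -
  let ?K = "\<sigma> ` J"
  have Xs_measurable: "Xs i \<in> borel_measurable M" for i
    using indep by (simp add: indep_vars_def)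
  have "sets D = sets borel" using ident[of undefined] by (metis sets_distr)
  then have sets_PiM_K: "sets (PiM ?K (\<lambda>_. D)) = sets (PiM ?K (\<lambda>_. borel))"
    and sets_PiM_J: "sets (PiM J (\<lambda>_. D)) = sets (PiM J (\<lambda>_. borel))"
    by (auto intro!: sets_PiM_cong)
  have "prob_space D" using prob_space_distr[OF Xs_measurable] ident by metis
  then have reindex: "distr (PiM ?K (\<lambda>_. D)) (PiM J (\<lambda>_. D)) (\<lambda>y. \<lambda>j\<in>J. y (\<sigma> j)) = PiM J (\<lambda>_. D)"
    using distr_PiM_reindex[of ?K "\<lambda>_. D" \<sigma> J] \<sigma> by auto
  have "indep_vars (\<lambda>_. borel) Xs ?K" by (rule indep_vars_subset[OF indep]) auto
  then have "distr M (PiM ?K (\<lambda>_. borel)) (\<lambda>\<omega>. \<lambda>i\<in>?K. Xs i \<omega>) = PiM ?K (\<lambda>i. distr M borel (Xs i))"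
    using indep_vars_iff_distr_eq_PiM[of ?K Xs "\<lambda>_. borel"] Xs_measurable J by simp
  then have joint: "distr M (PiM ?K (\<lambda>_. D)) (\<lambda>\<omega>. \<lambda>i\<in>?K. Xs i \<omega>) = PiM ?K (\<lambda>_. D)"
    using ident by (simp add: distr_cong[OF refl sets_PiM_K])
  have restrict_K: "(\<lambda>\<omega>. \<lambda>i\<in>?K. Xs i \<omega>) \<in> measurable M (PiM ?K (\<lambda>_. D))"
    unfolding measurable_cong_sets[OF refl sets_PiM_K] by (intro measurable_restrict Xs_measurable)
  have reindex_measurable: "(\<lambda>y. \<lambda>j\<in>J. y (\<sigma> j)) \<in> measurable (PiM ?K (\<lambda>_. D)) (PiM J (\<lambda>_. D))"
    by (intro measurable_restrict measurable_component_singleton) auto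
  have comp: "(\<lambda>y. \<lambda>j\<in>J. y (\<sigma> j)) \<circ> (\<lambda>\<omega>. \<lambda>i\<in>?K. Xs i \<omega>) = (\<lambda>\<omega>. \<lambda>j\<in>J. Xs (\<sigma> j) \<omega>)"
    by (auto simp: fun_eq_iff)
  have "distr M (PiM J (\<lambda>_. D)) (\<lambda>\<omega>. \<lambda>j\<in>J. Xs (\<sigma> j) \<omega>) = PiM J (\<lambda>_. D)"
    using distr_distr[OF reindex_measurable restrict_K] comp joint reindex by simp
  moreover have "(\<lambda>\<omega>. \<lambda>j\<in>J. Xs (\<sigma> j) \<omega>) \<in> measurable M (PiM J (\<lambda>_. D))"
    using measurable_comp[OF restrict_K reindex_measurable] comp by simp
  ultimately show ?thesis
    using measure_distr[of "\<lambda>\<omega>. \<lambda>j\<in>J. Xs (\<sigma> j) \<omega>" M "PiM J (\<lambda>_. D)" S] S sets_PiM_J by simp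
qed

lemma indep_vars_reindexed_restrict:
  fixes Xs :: "'i \<Rightarrow> 'a \<Rightarrow> 'b::topological_space" and \<sigma> :: "nat \<Rightarrow> 'j \<Rightarrow> 'i"
  assumes indep: "indep_vars (\<lambda>_. borel) Xs UNIV" and disj: "disjoint_family (\<lambda>n. \<sigma> n ` J)"
    and S: "S \<in> sets (PiM J (\<lambda>_. borel))"
  shows "indep_vars (\<lambda>_. count_space UNIV) (\<lambda>n \<omega>. (\<lambda>j\<in>J. Xs (\<sigma> n j) \<omega>) \<in> S) UNIV"
proof -
  have "indep_vars (\<lambda>n. PiM (\<sigma> n ` J) (\<lambda>_. borel)) (\<lambda>n \<omega>. \<lambda>i\<in>\<sigma> n ` J. Xs i \<omega>) UNIV"
    by (rule indep_vars_restrict[OF indep]) (use disj in \<open>auto simp: disjoint_family_on_def\<close>)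
  then have "indep_vars (\<lambda>_. count_space UNIV)
      (\<lambda>n \<omega>. (\<lambda>y. (\<lambda>j\<in>J. y (\<sigma> n j)) \<in> S) (\<lambda>i\<in>\<sigma> n ` J. Xs i \<omega>)) UNIV"
  proof (rule indep_vars_compose2)
    fix n
    have "(\<lambda>y. \<lambda>j\<in>J. y (\<sigma> n j)) \<in> measurable (PiM (\<sigma> n ` J) (\<lambda>_. borel)) (PiM J (\<lambda>_. borel :: 'b measure))"
      by (intro measurable_restrict measurable_component_singleton) auto
    from pred_sets2[OF S this]
    show "(\<lambda>y. (\<lambda>j\<in>J. y (\<sigma> n j)) \<in> S) \<in> measurable (PiM (\<sigma> n ` J) (\<lambda>_. borel)) (count_space UNIV)" .
  qed
  moreover have "(\<lambda>j\<in>J. (\<lambda>i\<in>\<sigma> n ` J. Xs i \<omega>) (\<sigma> n j)) = (\<lambda>j\<in>J. Xs (\<sigma> n j) \<omega>)" for n \<omega>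
    by (auto simp: fun_eq_iff)
  ultimately show ?thesis by simp
qed

lemma AE_reindexed_restrict_infinitely_often:
  fixes Xs :: "'i \<Rightarrow> 'a \<Rightarrow> 'b::topological_space" and \<sigma> :: "nat \<Rightarrow> 'j \<Rightarrow> 'i"
  assumes indep: "indep_vars (\<lambda>_. borel) Xs UNIV" and ident: "\<And>i. distr M borel (Xs i) = D"
    and J: "J \<noteq> {}" and S: "S \<in> sets (PiM J (\<lambda>_. borel))"
    and \<sigma>: "\<And>n. inj_on (\<sigma> n) J" and disj: "disjoint_family (\<lambda>n. \<sigma> n ` J)"
    and \<tau>: "inj_on \<tau> J" and pos: "0 < prob ((\<lambda>\<omega>. \<lambda>j\<in>J. Xs (\<tau> j) \<omega>) -` S \<inter> space M)"
  shows "AE \<omega> in M. \<forall>N. \<exists>n\<ge>N. (\<lambda>j\<in>J. Xs (\<sigma> n j) \<omega>) \<in> S"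
proof (rule AE_infinitely_often_of_indep_equiprobable)
  show "indep_vars (\<lambda>_. count_space UNIV) (\<lambda>n \<omega>. (\<lambda>j\<in>J. Xs (\<sigma> n j) \<omega>) \<in> S) UNIV"
    by (rule indep_vars_reindexed_restrict[OF indep disj S])
  show "prob {\<omega> \<in> space M. (\<lambda>j\<in>J. Xs (\<sigma> n j) \<omega>) \<in> S} = prob ((\<lambda>\<omega>. \<lambda>j\<in>J. Xs (\<tau> j) \<omega>) -` S \<inter> space M)" for n
    using prob_reindexed_restrict_iid[OF indep ident J \<sigma> S] prob_reindexed_restrict_iid[OF indep ident J \<tau> S]
    by (simp add: vimage_def Int_def conj_commute)
qed (rule pos)

lemma AE_norm_exceeds_infinitely_often:
  fixes Xs :: "'i \<Rightarrow> 'a \<Rightarrow> 'b::real_normed_vector" and \<iota> :: "nat \<Rightarrow> 'i"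
  assumes indep: "indep_vars (\<lambda>_. borel) Xs UNIV" and ident: "\<And>i. distr M borel (Xs i) = D"
    and \<iota>: "inj \<iota>" and pos: "0 < prob {\<omega> \<in> space M. b < norm (Xs i \<omega>)}"
  shows "AE \<omega> in M. \<forall>N. \<exists>n\<ge>N. b < norm (Xs (\<iota> n) \<omega>)"
proof -
  \<comment> \<open>a single sample is a pattern indexed by the unit type\<close>
  define S where "S = {y \<in> space (PiM UNIV (\<lambda>_. borel :: 'b measure)). b < norm (y ())}"
  have "(\<lambda>y. y ()) \<in> borel_measurable (PiM UNIV (\<lambda>_. borel :: 'b measure))"
    by (rule measurable_component_singleton) simp
  then have S: "S \<in> sets (PiM UNIV (\<lambda>_. borel))" unfolding S_def by measurable
  have "{\<omega> \<in> space M. b < norm (Xs i \<omega>)} = (\<lambda>\<omega>. \<lambda>j\<in>UNIV. Xs ((\<lambda>_. i) j) \<omega>) -` S \<inter> space M"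
    by (auto simp: S_def space_PiM)
  with pos have pos_S: "0 < prob ((\<lambda>\<omega>. \<lambda>j\<in>UNIV. Xs ((\<lambda>_. i) j) \<omega>) -` S \<inter> space M)" by simp
  have inj: "inj_on (\<lambda>_::unit. j) UNIV" for j :: 'i
    by (simp add: inj_on_def)
  have disj: "disjoint_family (\<lambda>n. (\<lambda>_::unit. \<iota> n) ` UNIV)"
    using \<iota> by (auto simp: disjoint_family_on_def inj_eq)
  have "AE \<omega> in M. \<forall>N. \<exists>n\<ge>N. (\<lambda>j\<in>UNIV. Xs (\<iota> n) \<omega>) \<in> S"
    using AE_reindexed_restrict_infinitely_often[where \<sigma> = "\<lambda>n _. \<iota> n",
        OF indep ident UNIV_not_empty S inj disj inj pos_S] .
  then show ?thesis by (simp add: S_def space_PiM)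
qed

lemma AE_bounded_of_iid_pointwise_bounded:
  fixes Xs :: "'i::countable \<Rightarrow> 'a \<Rightarrow> 'b::real_normed_vector"
  assumes indep: "indep_vars (\<lambda>_. borel) Xs UNIV" and ident: "\<And>i. distr M borel (Xs i) = D"
    and infinite: "infinite (UNIV :: 'i set)"
    and bdd: "\<And>\<omega>. \<omega> \<in> space M \<Longrightarrow> bdd_above (range (\<lambda>i. norm (Xs i \<omega>)))"
  shows "\<exists>b. AE \<omega> in M. \<forall>i. norm (Xs i \<omega>) \<le> b"
proof -
  obtain \<iota> :: "nat \<Rightarrow> 'i" where \<iota>: "inj \<iota>"
    using infinite by (auto simp: infinite_iff_countable_subset)
  have Xs_measurable[measurable]: "Xs i \<in> borel_measurable M" for i
    using indep by (simp add: indep_vars_def)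
  have prob_eq: "prob {\<omega> \<in> space M. b < norm (Xs i \<omega>)} = measure D {v. b < norm v}" for i b
  proof -
    have "{v. b < norm v} \<in> sets (borel :: 'b measure)" by measurable
    then show ?thesis
      using measure_distr[OF Xs_measurable[of i], of "{v. b < norm v}"] ident[of i]
      by (simp add: vimage_def Int_def conj_commute)
  qed
  have "\<exists>b::nat. measure D {v. real b < norm v} = 0"
  proof (rule ccontr)
    assume "\<nexists>b::nat. measure D {v. real b < norm v} = 0"
    then have "0 < prob {\<omega> \<in> space M. real b < norm (Xs (\<iota> 0) \<omega>)}" for b :: nat
      by (metis prob_eq measure_nonneg order_le_less)
    then have "AE \<omega> in M. \<forall>N. \<exists>n\<ge>N. real b < norm (Xs (\<iota> n) \<omega>)" for b :: nat
      by (rule AE_norm_exceeds_infinitely_often[OF indep ident \<iota>])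
    then have "AE \<omega> in M. \<forall>b::nat. \<forall>N. \<exists>n\<ge>N. real b < norm (Xs (\<iota> n) \<omega>)"
      by (simp add: AE_all_countable)
    then have "AE \<omega> in M. False"
    proof (rule AE_mp[OF _ AE_I2], intro impI)
      fix \<omega> assume "\<omega> \<in> space M" and unbounded: "\<forall>b::nat. \<forall>N. \<exists>n\<ge>N. real b < norm (Xs (\<iota> n) \<omega>)"
      obtain B where B: "\<And>i. norm (Xs i \<omega>) \<le> B" using bdd[OF \<open>\<omega> \<in> space M\<close>] by (auto simp: bdd_above_def)
      obtain b :: nat where "B < real b" using reals_Archimedean2 by blast
      moreover obtain n where "real b < norm (Xs (\<iota> n) \<omega>)" using unbounded by blast
      ultimately show False using B[of "\<iota> n"] by linarith
    qed
    then show False by (simp add: AE_False)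
  qed
  then obtain b :: nat where b: "measure D {v. real b < norm v} = 0" ..
  have "AE \<omega> in M. norm (Xs i \<omega>) \<le> real b" for i
  proof -
    have "{\<omega> \<in> space M. real b < norm (Xs i \<omega>)} \<in> events" by measurable
    with prob_eq[of b i] b have "AE \<omega> in M. \<omega> \<notin> {\<omega> \<in> space M. real b < norm (Xs i \<omega>)}"
      by (simp add: prob_eq_0)
    then show ?thesis by (rule AE_mp) (auto intro!: AE_I2)
  qed
  then show ?thesis by (auto simp: AE_all_countable)
qed

end

section \<open>Stochastic gradient descent on a quadratic loss\<close>

lemma measurable_affine_recursion:
  fixes \<theta> :: "nat \<Rightarrow> 'a \<Rightarrow> 'b::{real_normed_vector, second_countable_topology}"
  assumes "\<theta> 0 \<in> borel_measurable M" and "\<And>n. f n \<in> borel_measurable M"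
    and "\<And>n \<omega>. \<omega> \<in> space M \<Longrightarrow> \<theta> (Suc n) \<omega> = c *\<^sub>R \<theta> n \<omega> + f n \<omega>"
  shows "\<theta> n \<in> borel_measurable M"
proof (induction n)
  case (Suc n)
  have "(\<lambda>\<omega>. c *\<^sub>R \<theta> n \<omega> + f n \<omega>) \<in> borel_measurable M"
    using Suc assms(2) by measurable
  then show ?case by (rule measurable_cong[THEN iffD2, rotated]) (simp add: assms(3))
qed (rule assms(1))

lemma vimage_margin_event:
  "(\<lambda>\<omega>. restrict (\<xi> \<omega>) (window k k' K)) -` {y \<in> space (PiM (window k k' K) (\<lambda>_. borel)). margin_event a k k' K \<delta> y}
     \<inter> space M = {\<omega> \<in> space M. margin_event a k k' K \<delta> (\<xi> \<omega>)}"
  by (auto simp: space_PiM margin_event_restrict)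

lemma sets_margin_event:
  fixes Xs :: "int \<times> int \<Rightarrow> 'a \<Rightarrow> 'b::{real_normed_vector, second_countable_topology}"
  assumes "\<And>i. Xs i \<in> borel_measurable M"
  shows "{\<omega> \<in> space M. margin_event a k k' K \<delta> (\<lambda>i. Xs i \<omega>)} \<in> sets M"
proof -
  have "(\<lambda>\<omega>. \<lambda>i\<in>window k k' K. Xs i \<omega>) -`
      {y \<in> space (PiM (window k k' K) (\<lambda>_. borel)). margin_event a k k' K \<delta> y} \<inter> space M \<in> sets M"
    by (intro measurable_sets[OF _ margin_event_measurable] measurable_restrict assms)
  then show ?thesis by (simp only: vimage_margin_event[of "\<lambda>\<omega> i. Xs i \<omega>"])
qed

context prob_space
begin

lemma exists_margin_event_pos_prob:
  fixes Xs :: "int \<times> int \<Rightarrow> 'a \<Rightarrow> 'b::{banach, second_countable_topology}"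
  assumes Xs_measurable: "\<And>i. Xs i \<in> borel_measurable M"
    and a: "0 < a" "a < 2" and bound: "AE \<omega> in M. \<forall>i. norm (Xs i \<omega>) \<le> b"
    and pos: "0 < prob {\<omega> \<in> space M. 0 < dist_increase (1 - a) (a *\<^sub>R batch_mean k (\<lambda>i. Xs i \<omega>) 1)
        (batch_mean k' (\<lambda>i. Xs i \<omega>) 2) (\<Sum>j. (a * (1 - a) ^ j) *\<^sub>R batch_mean k (\<lambda>i. Xs i \<omega>) (- int j))}"
      (is "0 < prob ?P")
  shows "\<exists>\<delta> K. 0 < \<delta> \<and> 4 * ema_error a b K \<le> \<delta>
    \<and> 0 < prob {\<omega> \<in> space M. margin_event a k k' K \<delta> (\<lambda>i. Xs i \<omega>)}"
proof (rule ccontr)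
  let ?E = "\<lambda>j K. {\<omega> \<in> space M. margin_event a k k' K (1 / Suc j) (\<lambda>i. Xs i \<omega>)}"
  assume none: "\<nexists>\<delta> K. 0 < \<delta> \<and> 4 * ema_error a b K \<le> \<delta>
    \<and> 0 < prob {\<omega> \<in> space M. margin_event a k k' K \<delta> (\<lambda>i. Xs i \<omega>)}"
  have E_events: "?E j K \<in> events" for j K
    by (rule sets_margin_event[OF Xs_measurable])
  have "AE \<omega> in M. 4 * ema_error a b K \<le> 1 / Suc j \<longrightarrow> \<omega> \<notin> ?E j K" for j K
  proof (cases "4 * ema_error a b K \<le> 1 / Suc j")
    case True
    then have "\<not> 0 < prob (?E j K)" using none by auto
    then have "prob (?E j K) = 0" using measure_nonneg[of M "?E j K"] by linarith
    then have "AE \<omega> in M. \<omega> \<notin> ?E j K" using prob_eq_0[OF E_events] by simp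
    then show ?thesis by (rule AE_mp) (auto intro!: AE_I2)
  qed simp
  then have "AE \<omega> in M. \<forall>j K. 4 * ema_error a b K \<le> 1 / Suc j \<longrightarrow> \<omega> \<notin> ?E j K"
    by (simp add: AE_all_countable)
  with bound have "AE \<omega> in M. \<omega> \<notin> ?P"
  proof eventually_elim
    case (elim \<omega>)
    show ?case
    proof
      assume P: "\<omega> \<in> ?P"
      have bound_\<omega>: "norm (Xs i \<omega>) \<le> b" for i using elim(1) by blast
      from P obtain j K where "4 * ema_error a b K \<le> 1 / Suc j" "margin_event a k k' K (1 / Suc j) (\<lambda>i. Xs i \<omega>)"
        using margin_event_of_series_margin[where x = "\<lambda>i. Xs i \<omega>", OF a bound_\<omega>] by blast
      with elim(2) P show False by auto
    qed
  qed
  \<comment> \<open>a set that is not measurable has measure \<open>0\<close>\<close>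
  moreover have "?P \<in> events" using pos measure_notin_sets by fastforce
  ultimately have "prob ?P = 0" using prob_eq_0 by blast
  with pos show False by simp
qed

lemma AE_margin_event_infinitely_often:
  fixes Xs :: "int \<times> int \<Rightarrow> 'a \<Rightarrow> 'b::{real_normed_vector, second_countable_topology}"
  assumes indep: "indep_vars (\<lambda>_. borel) Xs UNIV" and ident: "\<And>i. distr M borel (Xs i) = D"
    and k: "1 \<le> k" and pos: "0 < prob {\<omega> \<in> space M. margin_event a k k' K \<delta> (\<lambda>i. Xs i \<omega>)}"
  shows "AE \<omega> in M. \<forall>N. \<exists>n\<ge>N. margin_event a k k' K \<delta> ((\<lambda>i. Xs i \<omega>) \<circ> place (int (Suc n)))"
proof -
  let ?S = "{y \<in> space (PiM (window k k' K) (\<lambda>_. borel)). margin_event a k k' K \<delta> y}"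
  have "0 < prob ((\<lambda>\<omega>. \<lambda>i\<in>window k k' K. Xs (id i) \<omega>) -` ?S \<inter> space M)"
    using pos vimage_margin_event[of "\<lambda>\<omega> i. Xs i \<omega>"] by simp
  from AE_reindexed_restrict_infinitely_often[OF indep ident window_nonempty[OF k] margin_event_measurable
      inj_on_place disjoint_family_place inj_on_id this]
  have "AE \<omega> in M. \<forall>N. \<exists>n\<ge>N. (\<lambda>i\<in>window k k' K. Xs (place (int ((n + 1) * (K + 1))) i) \<omega>) \<in> ?S" .
  then show ?thesis
  proof (rule AE_mp[OF _ AE_I2], intro impI allI)
    fix \<omega> N assume "\<forall>N. \<exists>n\<ge>N. (\<lambda>i\<in>window k k' K. Xs (place (int ((n + 1) * (K + 1))) i) \<omega>) \<in> ?S"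
    then obtain n where "n \<ge> N" and "margin_event a k k' K \<delta> (\<lambda>i. Xs (place (int ((n + 1) * (K + 1))) i) \<omega>)"
      by (auto simp: margin_event_restrict)
    moreover have "Suc (n * (K + 1) + K) = (n + 1) * (K + 1)" by simp
    ultimately show "\<exists>n\<ge>N. margin_event a k k' K \<delta> ((\<lambda>i. Xs i \<omega>) \<circ> place (int (Suc n)))"
      by (intro exI[of _ "n * (K + 1) + K"]) (auto simp: comp_def algebra_simps)
  qed
qed

lemma AE_sgd_moves_away_infinitely_often:
  fixes Xs :: "int \<times> int \<Rightarrow> 'a \<Rightarrow> 'b::{banach, second_countable_topology}" and \<theta> :: "nat \<Rightarrow> 'a \<Rightarrow> 'b"
  assumes indep: "indep_vars (\<lambda>_. borel) Xs UNIV" and ident: "\<And>i. distr M borel (Xs i) = D"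
    and bdd: "\<And>\<omega>. \<omega> \<in> space M \<Longrightarrow> bdd_above (range (\<lambda>i. norm (Xs i \<omega>)))"
    and a: "0 < a" "a < 2" and k: "1 \<le> k"
    and step: "\<And>n \<omega>. \<omega> \<in> space M \<Longrightarrow> \<theta> (Suc n) \<omega> = (1 - a) *\<^sub>R \<theta> n \<omega> + a *\<^sub>R batch_mean k (\<lambda>i. Xs i \<omega>) (int (Suc n))"
    and pos: "0 < prob {\<omega> \<in> space M. 0 < dist_increase (1 - a) (a *\<^sub>R batch_mean k (\<lambda>i. Xs i \<omega>) 1)
        (batch_mean k' (\<lambda>i. Xs i \<omega>) 2) (\<Sum>j. (a * (1 - a) ^ j) *\<^sub>R batch_mean k (\<lambda>i. Xs i \<omega>) (- int j))}"
  shows "AE \<omega> in M. \<forall>N. \<exists>n\<ge>N.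
    dist (\<theta> n \<omega>) (batch_mean k' ((\<lambda>i. Xs i \<omega>) \<circ> apsnd uminus) (int (Suc n)))
      < dist (\<theta> (Suc n) \<omega>) (batch_mean k' ((\<lambda>i. Xs i \<omega>) \<circ> apsnd uminus) (int (Suc n)))"
proof -
  have Xs_measurable: "Xs i \<in> borel_measurable M" for i
    using indep by (cases i) (simp add: indep_vars_def)
  have "infinite (UNIV :: (int \<times> int) set)" by (simp add: finite_prod)
  then obtain b where bound: "AE \<omega> in M. \<forall>i. norm (Xs i \<omega>) \<le> b"
    using AE_bounded_of_iid_pointwise_bounded[OF indep ident _ bdd] by blast
  then obtain \<delta> K where \<delta>: "0 < \<delta>" "4 * ema_error a b K \<le> \<delta>"
    and event: "0 < prob {\<omega> \<in> space M. margin_event a k k' K \<delta> (\<lambda>i. Xs i \<omega>)}"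
    using exists_margin_event_pos_prob[OF Xs_measurable a _ pos] by blast
  from event have "AE \<omega> in M. \<forall>N. \<exists>n\<ge>N. margin_event a k k' K \<delta> ((\<lambda>i. Xs i \<omega>) \<circ> place (int (Suc n)))"
    by (rule AE_margin_event_infinitely_often[OF indep ident k])
  with bound AE_space show ?thesis
  proof eventually_elim
    case (elim \<omega>)
    then show ?case
      using moves_away_infinitely_often[where \<theta> = "\<lambda>n. \<theta> n \<omega>", OF step[OF elim(2)] a _ \<delta>] by blast
  qed
qed

lemma AE_sgd_test_loss_increases:
  fixes X :: "int \<Rightarrow> int \<Rightarrow> 'a \<Rightarrow> 'b::{real_inner, banach, second_countable_topology}"
    and \<theta> :: "nat \<Rightarrow> 'a \<Rightarrow> 'b"
  assumes indep: "indep_vars (\<lambda>_. borel) (\<lambda>(n, m). X n m) UNIV"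
    and ident: "\<And>n m. distr M borel (X n m) = distr M borel (X 0 0)"
    and bdd: "\<And>\<omega>. \<omega> \<in> space M \<Longrightarrow> bdd_above (range (\<lambda>(n, m). norm (X n m \<omega>)))"
    and a: "0 < a" "a < 2" and k: "1 \<le> k" and k': "1 \<le> k'"
    and step: "\<And>n \<omega>. \<omega> \<in> space M \<Longrightarrow>
      \<theta> (Suc n) \<omega> = (1 - a) *\<^sub>R \<theta> n \<omega> + a *\<^sub>R batch_mean k (\<lambda>(r, m). X r m \<omega>) (int (Suc n))"
    and pos: "0 < prob {\<omega> \<in> space M. 0 < dist_increase (1 - a) (a *\<^sub>R batch_mean k (\<lambda>(r, m). X r m \<omega>) 1)
        (batch_mean k' (\<lambda>(r, m). X r m \<omega>) 2)
        (\<Sum>j. (a * (1 - a) ^ j) *\<^sub>R batch_mean k (\<lambda>(r, m). X r m \<omega>) (- int j))}"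
    and \<kappa>: "0 < \<kappa>"
  shows "AE \<omega> in M. \<exists>n\<ge>N. (\<Sum>m = 1..k'. \<kappa> / 2 * (norm (\<theta> (n - 1) \<omega> - X (int n) (- int m) \<omega>))\<^sup>2)
    < (\<Sum>m = 1..k'. \<kappa> / 2 * (norm (\<theta> n \<omega> - X (int n) (- int m) \<omega>))\<^sup>2)"
proof -
  let ?Xs = "\<lambda>i \<omega>. case i of (r, m) \<Rightarrow> X r m \<omega>"
  have "AE \<omega> in M. \<forall>N. \<exists>n\<ge>N.
    dist (\<theta> n \<omega>) (batch_mean k' ((\<lambda>(r, m). X r m \<omega>) \<circ> apsnd uminus) (int (Suc n)))
      < dist (\<theta> (Suc n) \<omega>) (batch_mean k' ((\<lambda>(r, m). X r m \<omega>) \<circ> apsnd uminus) (int (Suc n)))"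
  proof (rule AE_sgd_moves_away_infinitely_often[where Xs = ?Xs, OF _ _ _ a k step pos])
    have "?Xs = (\<lambda>(n, m). X n m)" by (auto simp: fun_eq_iff split: prod.split)
    with indep show "indep_vars (\<lambda>_. borel) ?Xs UNIV" by simp
    show "distr M borel (?Xs i) = distr M borel (X 0 0)" for i
      using ident by (cases i) simp
    have norm_Xs: "(\<lambda>i. norm (?Xs i \<omega>)) = (\<lambda>(n, m). norm (X n m \<omega>))" for \<omega>
      by (auto simp: fun_eq_iff split: prod.split)
    show "bdd_above (range (\<lambda>i. norm (?Xs i \<omega>)))" if "\<omega> \<in> space M" for \<omega>
      unfolding norm_Xs by (rule bdd[OF that])
  qed
  then show ?thesis
  proof eventually_elim
    case (elim \<omega>)
    then obtain n where "N \<le> n"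
      and "dist (\<theta> n \<omega>) (batch_mean k' ((\<lambda>(r, m). X r m \<omega>) \<circ> apsnd uminus) (int (Suc n)))
        < dist (\<theta> (Suc n) \<omega>) (batch_mean k' ((\<lambda>(r, m). X r m \<omega>) \<circ> apsnd uminus) (int (Suc n)))"
      by blast
    from this(2) k' have "(\<Sum>m = 1..k'. (norm (\<theta> n \<omega> - X (int (Suc n)) (- int m) \<omega>))\<^sup>2)
        < (\<Sum>m = 1..k'. (norm (\<theta> (Suc n) \<omega> - X (int (Suc n)) (- int m) \<omega>))\<^sup>2)"
      by (intro sum_power2_norm_diff_less_if_closer_to_mean) (simp_all add: dist_norm batch_mean_def)
    then have "\<kappa> / 2 * (\<Sum>m = 1..k'. (norm (\<theta> n \<omega> - X (int (Suc n)) (- int m) \<omega>))\<^sup>2)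
        < \<kappa> / 2 * (\<Sum>m = 1..k'. (norm (\<theta> (Suc n) \<omega> - X (int (Suc n)) (- int m) \<omega>))\<^sup>2)"
      using \<kappa> by (intro mult_strict_left_mono) auto
    with \<open>N \<le> n\<close> show ?case
      unfolding sum_distrib_left by (intro exI[of _ "Suc n"]) simp
  qed
qed

end

theorem proposition5p5:
  fixes \<kappa> \<gamma> :: real
    and l :: "real^'d \<Rightarrow> real^'d \<Rightarrow> real"
    and M :: "'w measure"
    and X :: "int \<Rightarrow> int \<Rightarrow> 'w \<Rightarrow> real^'d"
    and Mb Mf N :: nat
    and \<Theta> :: "nat \<Rightarrow> 'w \<Rightarrow> real^'d"
  assumes kappa: "0 < \<kappa>"
    and l_def: "\<And>\<theta> \<theta>'. l \<theta> \<theta>' = \<kappa> / 2 * (norm (\<theta> - \<theta>'))\<^sup>2"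
    and gamma: "0 < \<gamma>" "\<gamma> < 2 / \<kappa>"
    and P: "prob_space M"
    and X_rv: "\<And>n m. X n m \<in> borel_measurable M"
    and X_indep: "prob_space.indep_vars M (\<lambda>_. borel) (\<lambda>(n, m). X n m) UNIV"
    and X_ident: "\<And>n m. distr M borel (X n m) = distr M borel (X 0 0)"
    and Mb: "1 \<le> Mb" and Mf: "1 \<le> Mf"
    and rec: "\<And>n \<omega>. 1 \<le> n \<Longrightarrow> \<omega> \<in> space M \<Longrightarrow>
       \<Theta> n \<omega> = \<Theta> (n - 1) \<omega> - (\<gamma> / real Mb) *\<^sub>R
         (\<Sum>m = 1..Mb. gradient (\<lambda>\<theta>. l \<theta> (X (int n) (int m) \<omega>)) (\<Theta> (n - 1) \<omega>))"
    and X_bdd: "\<And>\<omega>. \<omega> \<in> space M \<Longrightarrow> bdd_above (range (\<lambda>(n, m). norm (X n m \<omega>)))"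
    and Theta0_rv: "\<Theta> 0 \<in> borel_measurable M"
    and indep_Theta0: "prob_space.indep_set M
       (sigma_sets (space M) (\<Union>p. {X (fst p) (snd p) -` A \<inter> space M | A. A \<in> sets borel}))
       (sigma_sets (space M) {\<Theta> 0 -` A \<inter> space M | A. A \<in> sets borel})"
    and pos: "measure M {\<omega> \<in> space M.
       let chi = (\<Sum>n. (\<kappa> * \<gamma> * (1 - \<kappa> * \<gamma>) ^ n / real Mb) *\<^sub>R
                      (\<Sum>m = 1..Mb. X (- int n) (int m) \<omega>));
           Y = (1 / real Mf) *\<^sub>R (\<Sum>m = 1..Mf. X 2 (int m) \<omega>)
       in norm ((1 - \<kappa> * \<gamma>) *\<^sub>R chi + (\<kappa> * \<gamma> / real Mb) *\<^sub>R (\<Sum>m = 1..Mb. X 1 (int m) \<omega>) - Y)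
          > norm (chi - Y)} > 0"
    and N: "1 \<le> N"
  shows "measure M {\<omega> \<in> space M. \<exists>n \<ge> N.
           (\<Sum>m = 1..Mf. l (\<Theta> n \<omega>) (X (int n) (- int m) \<omega>))
         > (\<Sum>m = 1..Mf. l (\<Theta> (n - 1) \<omega>) (X (int n) (- int m) \<omega>))} = 1"
proof -
  interpret prob_space M by (rule P)
  define a where "a = \<kappa> * \<gamma>"
  have a: "0 < a" "a < 2" using kappa gamma by (auto simp: a_def field_simps)
  have step: "\<Theta> (Suc n) \<omega> = (1 - a) *\<^sub>R \<Theta> n \<omega> + a *\<^sub>R batch_mean Mb (\<lambda>(r, m). X r m \<omega>) (int (Suc n))"
    if "\<omega> \<in> space M" for n \<omega>
    using rec[of "Suc n" \<omega>] that minibatch_gradient_step_half_power2_dist[OF Mb]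
    by (simp add: l_def a_def batch_mean_def)
  note X_rv[measurable]
  have [measurable]: "\<Theta> n \<in> borel_measurable M" for n
    by (rule measurable_affine_recursion[OF Theta0_rv _ step]) (simp add: batch_mean_def)
  have "0 < prob {\<omega> \<in> space M. 0 < dist_increase (1 - a) (a *\<^sub>R batch_mean Mb (\<lambda>(r, m). X r m \<omega>) 1)
      (batch_mean Mf (\<lambda>(r, m). X r m \<omega>) 2)
      (\<Sum>j. (a * (1 - a) ^ j) *\<^sub>R batch_mean Mb (\<lambda>(r, m). X r m \<omega>) (- int j))}"
    using pos by (simp add: Let_def dist_increase_def dist_norm batch_mean_def a_def)
  from AE_sgd_test_loss_increases[OF X_indep X_ident X_bdd a Mb Mf step this kappa]
  have "AE \<omega> in M. \<exists>n \<ge> N. (\<Sum>m = 1..Mf. l (\<Theta> n \<omega>) (X (int n) (- int m) \<omega>))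
      > (\<Sum>m = 1..Mf. l (\<Theta> (n - 1) \<omega>) (X (int n) (- int m) \<omega>))"
    unfolding l_def .
  moreover have "{\<omega> \<in> space M. \<exists>n \<ge> N. (\<Sum>m = 1..Mf. l (\<Theta> n \<omega>) (X (int n) (- int m) \<omega>))
      > (\<Sum>m = 1..Mf. l (\<Theta> (n - 1) \<omega>) (X (int n) (- int m) \<omega>))} \<in> events"
    unfolding l_def by measurable
  ultimately show ?thesis by (simp only: prob_Collect_eq_1)
qed

end
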